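(* Let $b \geq 2$ be an integer. There exists a constant $C_b > 0$, depending only on $b$, such that for every integer $n > e$ (i.e., $n \geq 3$), \[ s_b(n!) > C_b \log n \,\log\log\log n \quad\text{and}\quad s_b(\Lambda_n) > C_b \log n \,\log\log\log n . \]
   Context: For an integer $b \geq 2$ and a positive integer $m$, $s_b(m)$ denotes the sum of the digits of $m$ when written in base $b$. For a positive integer $n$, $\Lambda_n := \operatorname{lcm}(1,2,\ldots,n)$ is the least common multiple of $1,2,\ldots,n$. $\log$ is the natural logarithm. *)

theory Defs
  imports Complex_Main
begin

fun digit_sum :: "nat \<Rightarrow> nat \<Rightarrow> nat" where
  "digit_sum b m = (if b < 2 \<or> m = 0 then 0 else m mod b + digit_sum b (m div b))"

declare digit_sum.simps[simp del]

definition lcm_upto :: "nat \<Rightarrow> nat" where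
  "lcm_upto n = Lcm {1..n}"

end

theory Submission
  imports Defs "HOL-Number_Theory.Number_Theory" "HOL-Analysis.Harmonic_Numbers"
    "HOL-Real_Asymp.Real_Asymp"
begin

text \<open>If \<open>b ^ T - 1\<close> divides a positive \<open>m\<close>, then \<open>s\<^sub>b(m) \<ge> (b - 1) T\<close>. Since \<open>\<Lambda>\<^sub>n\<close> divides \<open>n!\<close>,
  it suffices to find a large \<open>T\<close> with \<open>b ^ T - 1\<close> dividing \<open>\<Lambda>\<^sub>n\<close>, i.e. with every prime power
  \<open>p ^ v\<^sub>p(b ^ T - 1)\<close> at most \<open>n\<close>. Lifting the exponent reduces
  \<open>v\<^sub>p(b ^ T - 1)\<close> to \<open>v\<^sub>p(b ^ u - 1)\<close> for \<open>u = ord\<^sub>p(b)\<close>, and \<open>p ^ v\<^sub>p(b ^ u - 1)\<close> divides the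
  cyclotomic value \<open>\<Phi>\<^sub>u(b) \<le> e\<^sup>2 b ^ \<phi>(u)\<close>; altogether \<open>p ^ v\<^sub>p(b ^ T - 1) \<le> 9 T b ^ (\<phi>(T) + 2)\<close>.
  So \<open>T\<close> only needs \<open>\<phi>(T) \<le> K \<approx> log n / (3 log b)\<close>, and \<open>T = m \<cdot> y!\<close> with \<open>y \<approx> \<surd>(log K)\<close> and
  \<open>m\<close> maximal gives \<open>T \<ge> K H\<^sub>y / 2 \<gg> log n \<cdot> log log log n\<close>, because
  \<open>y!/\<phi>(y!) = \<Prod>\<^sub>p\<^sub>\<le>\<^sub>y (1 - 1/p)\<^sup>-\<^sup>1 \<ge> H\<^sub>y\<close>.\<close>

section \<open>Digit sums\<close>

lemma digit_sum_0 [simp]: "digit_sum b 0 = 0"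
  by (simp add: digit_sum.simps)

lemma digit_sum_rec:
  assumes "b \<ge> 2"
  shows "digit_sum b m = m mod b + digit_sum b (m div b)"
  using assms by (cases "m = 0") (simp_all add: digit_sum.simps[of b m])

lemma digit_sum_pos:
  assumes "b \<ge> 2" "m > 0"
  shows "digit_sum b m \<ge> 1"
  using assms(2)
proof (induction m rule: less_induct)
  case (less m)
  show ?case
  proof (cases "m mod b = 0")
    case True
    then have "m div b > 0" using less.prems by (metis div_mult_mod_eq add_0_right mult_0 gr0I)
    moreover have "m div b < m" using less.prems assms(1) by simp
    ultimately show ?thesis using less.IH digit_sum_rec[OF assms(1), of m] by fastforce
  qed (simp add: digit_sum_rec[OF assms(1), of m])
qed

lemma digit_sum_mult_power_add:
  assumes "b \<ge> 2" "r < b ^ T"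
  shows "digit_sum b (q * b ^ T + r) = digit_sum b q + digit_sum b r"
  using assms(2)
proof (induction T arbitrary: q r)
  case (Suc T)
  have "q * b ^ Suc T + r = (q * b ^ T + r div b) * b + r mod b"
    by (simp add: algebra_simps)
  moreover have "r div b < b ^ T"
    using Suc.prems assms(1) by (simp add: div_less_iff_less_mult mult.commute)
  ultimately show ?case
    using Suc.IH digit_sum_rec[OF assms(1), of "q * b ^ Suc T + r"] digit_sum_rec[OF assms(1), of r]
      assms(1) by simp
qed simp

lemma digit_sum_add_le:
  assumes "b \<ge> 2"
  shows "digit_sum b (x + y) \<le> digit_sum b x + digit_sum b y"
proof (induction "x + y" arbitrary: x y rule: less_induct)
  case less
  show ?case
  proof (cases "x + y = 0")
    case False
    define c where "c = (x mod b + y mod b) div b"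
    have "x mod b + y mod b < 2 * b"
      using mod_less_divisor[of b x] mod_less_divisor[of b y] assms by linarith
    then have "c < 2"
      unfolding c_def using assms by (simp add: div_less_iff_less_mult mult.commute)
    then have carry: "digit_sum b c \<le> c"
    proof (cases "c = 0")
      case False
      then have "c = 1" using \<open>c < 2\<close> by simp
      then show ?thesis using digit_sum_rec[OF assms, of 1] assms by simp
    qed simp
    have "(x + y) mod b = (x mod b + y mod b) mod b" by (rule mod_add_eq[symmetric])
    also have "\<dots> = x mod b + y mod b - c * b"
      unfolding c_def by (rule minus_div_mult_eq_mod[symmetric])
    finally have "(x + y) mod b = x mod b + y mod b - c * b" .
    moreover have "c * b \<le> x mod b + y mod b" unfolding c_def by simp
    ultimately have low: "(x + y) mod b + c * b = x mod b + y mod b" by simp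
    have "(x + y) div b = x div b + y div b + c"
      unfolding c_def by (rule div_add1_eq)
    then have high: "(x + y) div b = x div b + (y div b + c)" by (simp only: add.assoc)
    have "(x + y) div b < x + y" using False assms by simp
    then have smaller: "x div b + (y div b + c) < x + y" "y div b + c < x + y"
      unfolding high by linarith+
    have "digit_sum b ((x + y) div b) \<le> digit_sum b (x div b) + digit_sum b (y div b + c)"
      unfolding high by (rule less(1)[OF smaller(1)])
    also have "\<dots> \<le> digit_sum b (x div b) + digit_sum b (y div b) + c"
      using less(1)[OF smaller(2)] carry by linarith
    finally have "digit_sum b ((x + y) div b) \<le> digit_sum b (x div b) + digit_sum b (y div b) + c" .
    moreover have "c \<le> c * b" using assms by simp
    ultimately show ?thesis
      using low digit_sum_rec[OF assms, of "x + y"] digit_sum_rec[OF assms, of x]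
        digit_sum_rec[OF assms, of y] by linarith
  qed simp
qed

lemma digit_sum_power_minus_one:
  assumes "b \<ge> 2"
  shows "digit_sum b (b ^ T - 1) = (b - 1) * T"
proof (induction T)
  case (Suc T)
  have split: "b ^ Suc T - 1 = (b ^ T - 1) * b + (b - 1)"
    using assms by (simp add: algebra_simps diff_mult_distrib)
  have "b - 1 < b" using assms by simp
  then have "(b ^ Suc T - 1) mod b = b - 1" "(b ^ Suc T - 1) div b = b ^ T - 1"
    unfolding split using assms by (simp_all only: mod_mult_self3 mod_less div_mult_self3 div_less)
  then have "digit_sum b (b ^ Suc T - 1) = (b - 1) + digit_sum b (b ^ T - 1)"
    using digit_sum_rec[OF assms, of "b ^ Suc T - 1"] by simp
  then show ?case using Suc by simp
qed simp

text \<open>Cutting a multiple of \<open>b ^ T - 1\<close> into its lowest \<open>T\<close> digits and the rest and adding the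
  two pieces gives a smaller multiple of \<open>b ^ T - 1\<close> without increasing the digit sum; the descent
  stops at \<open>b ^ T - 1\<close> itself.\<close>

lemma digit_sum_ge_if_dvd:
  assumes "b \<ge> 2" "T \<ge> 1" "m > 0" "(b ^ T - 1) dvd m"
  shows "digit_sum b m \<ge> (b - 1) * T"
  using assms(3,4)
proof (induction m rule: less_induct)
  case (less m)
  have bT: "b ^ T \<ge> 2"
    using power_increasing[of 1 T b] assms(1,2) by simp
  show ?case
  proof (cases "m < b ^ T")
    case True
    obtain k where k: "m = (b ^ T - 1) * k" using less.prems by auto
    have "k \<noteq> 0" using k less.prems by auto
    moreover have "k < 2"
    proof (rule ccontr)
      assume "\<not> k < 2"
      then have "(b ^ T - 1) * 2 \<le> m" unfolding k by (intro mult_le_mono) auto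
      then show False using True bT by simp
    qed
    ultimately have "k = 1" by simp
    then show ?thesis using k digit_sum_power_minus_one[OF assms(1)] by simp
  next
    case False
    define q r where "q = m div b ^ T" and "r = m mod b ^ T"
    have m: "m = q * b ^ T + r" unfolding q_def r_def by (rule div_mult_mod_eq[symmetric])
    have r: "r < b ^ T" unfolding r_def using bT by (intro mod_less_divisor) linarith
    have q: "q \<ge> 1" unfolding q_def using False bT assms(1) by (simp add: div_greater_zero_iff Suc_le_eq)
    have "q * 1 < q * b ^ T" using q bT by (intro mult_strict_left_mono) auto
    then have smaller: "q + r < m" unfolding m by simp
    have "q * (b ^ T - 1) + q = q * b ^ T" using bT by (simp add: diff_mult_distrib2)
    then have "m = q * (b ^ T - 1) + (q + r)" unfolding m by linarith
    then have "(b ^ T - 1) dvd (q + r)"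
      using less.prems(2) by (metis dvd_add_right_iff dvd_triv_right)
    then have "(b - 1) * T \<le> digit_sum b (q + r)"
      using less.IH[OF smaller] q by simp
    also have "\<dots> \<le> digit_sum b q + digit_sum b r" by (rule digit_sum_add_le[OF assms(1)])
    also have "\<dots> = digit_sum b m" unfolding m using digit_sum_mult_power_add[OF assms(1) r] by simp
    finally show ?thesis .
  qed
qed

lemma lcm_upto_dvd_fact: "lcm_upto n dvd fact n"
  unfolding lcm_upto_def by (rule Lcm_least) (auto intro: dvd_fact)

lemma lcm_upto_pos: "lcm_upto n > 0"
  unfolding lcm_upto_def by (metis Lcm_0_iff finite_atLeastAtMost atLeastAtMost_iff
    not_one_le_zero gr0I)

lemma dvd_lcm_upto:
  assumes "d > 0" "\<And>p. prime p \<Longrightarrow> p ^ multiplicity p d \<le> n"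
  shows "d dvd lcm_upto n"
proof (rule multiplicity_le_imp_dvd)
  fix p :: nat assume p: "prime p"
  have "p ^ multiplicity p d \<in> {1..n}" using assms(2)[OF p] p
    by (simp add: prime_gt_0_nat Suc_le_eq)
  then have "p ^ multiplicity p d dvd lcm_upto n" unfolding lcm_upto_def by (rule dvd_Lcm)
  then show "multiplicity p d \<le> multiplicity p (lcm_upto n)"
    using lcm_upto_pos p by (metis multiplicity_geI not_prime_unit order_less_irrefl)
qed (use assms in simp)

section \<open>Valuations of \<open>b ^ e - 1\<close>\<close>

lemma power_minus_one_neq_0:
  fixes b :: nat
  assumes "b \<ge> 2" "e > 0"
  shows "b ^ e - 1 \<noteq> 0"
  using power_increasing[of 1 e b] assms by simp

lemma dvd_power_minus_one_iff_ord_dvd: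
  fixes b :: nat
  assumes "b \<ge> 1"
  shows "m dvd b ^ e - 1 \<longleftrightarrow> ord m b dvd e"
proof -
  have "m dvd b ^ e - 1 \<longleftrightarrow> [b ^ e = 1] (mod m)"
    using assms by (simp add: cong_altdef_nat)
  also have "\<dots> \<longleftrightarrow> ord m b dvd e" by (rule ord_divides)
  finally show ?thesis .
qed

lemma power_minus_one_dvd_power_minus_one:
  fixes b :: nat
  assumes "b \<ge> 1" "d dvd e"
  shows "b ^ d - 1 dvd b ^ e - 1"
  using assms dvd_power_minus_one_iff_ord_dvd[OF assms(1)] by (meson dvd_refl dvd_trans)

lemma multiplicity_power_minus_one_gcd:
  fixes b q x y :: nat
  assumes b: "b \<ge> 2" and q: "prime q" and "x > 0" "y > 0"
  shows "multiplicity q (b ^ gcd x y - 1)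
           = min (multiplicity q (b ^ x - 1)) (multiplicity q (b ^ y - 1))"
proof -
  have le_iff: "k \<le> multiplicity q (b ^ e - 1) \<longleftrightarrow> ord (q ^ k) b dvd e" if "e > 0" for e k
  proof -
    have "k \<le> multiplicity q (b ^ e - 1) \<longleftrightarrow> q ^ k dvd b ^ e - 1"
      using power_dvd_iff_le_multiplicity power_minus_one_neq_0[OF b that] q
      by (metis not_prime_unit)
    also have "\<dots> \<longleftrightarrow> ord (q ^ k) b dvd e" using b by (intro dvd_power_minus_one_iff_ord_dvd) simp
    finally show ?thesis .
  qed
  have "k \<le> multiplicity q (b ^ gcd x y - 1) \<longleftrightarrow>
          k \<le> min (multiplicity q (b ^ x - 1)) (multiplicity q (b ^ y - 1))" for k
    using le_iff[of "gcd x y" k] le_iff[of x k] le_iff[of y k] assms by simp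
  then show ?thesis by (meson le_antisym order_refl)
qed

section \<open>Moebius sums over squarefree divisors\<close>

text \<open>For \<open>R = prime_factors e\<close>, \<open>moebius_sum g e R\<close> is \<open>\<Sum>d dvd e. \<mu>(d) g(e/d)\<close>.\<close>

definition moebius_sum :: "(nat \<Rightarrow> 'a::comm_ring_1) \<Rightarrow> nat \<Rightarrow> nat set \<Rightarrow> 'a" where
  "moebius_sum g e R = (\<Sum>S\<in>Pow R. (-1) ^ card S * g (e div \<Prod>S))"

lemma moebius_sum_empty [simp]: "moebius_sum g e {} = g e"
  by (simp add: moebius_sum_def)

lemma moebius_sum_insert:
  assumes "finite R" "x \<notin> R"
  shows "moebius_sum g e (insert x R) = moebius_sum g e R - moebius_sum g (e div x) R"
proof -
  have inj: "inj_on (insert x) (Pow R)" using assms unfolding inj_on_def by auto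
  have "moebius_sum g e (insert x R) = moebius_sum g e R
          + (\<Sum>S\<in>insert x ` Pow R. (-1) ^ card S * g (e div \<Prod>S))"
    unfolding moebius_sum_def Pow_insert using assms by (intro sum.union_disjoint) auto
  also have "(\<Sum>S\<in>insert x ` Pow R. (-1) ^ card S * g (e div \<Prod>S))
      = (\<Sum>S\<in>Pow R. - ((-1) ^ card S * g (e div x div \<Prod>S)))"
    unfolding sum.reindex[OF inj, unfolded comp_def]
  proof (rule sum.cong[OF refl])
    fix S assume "S \<in> Pow R"
    then have "finite S" "x \<notin> S" using assms finite_subset by auto
    then show "(-1) ^ card (insert x S) * g (e div \<Prod>(insert x S))
                 = - ((-1) ^ card S * g (e div x div \<Prod>S))"
      by (simp add: div_mult2_eq)
  qed
  finally show ?thesis unfolding moebius_sum_def by (simp add: sum_negf)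
qed

lemma moebius_sum_parity_split:
  fixes g :: "nat \<Rightarrow> 'a::comm_ring_1"
  assumes "finite R"
  shows "moebius_sum g e R = (\<Sum>S | S \<subseteq> R \<and> even (card S). g (e div \<Prod>S))
                           - (\<Sum>S | S \<subseteq> R \<and> odd (card S). g (e div \<Prod>S))"
proof -
  have "Pow R = {S. S \<subseteq> R \<and> even (card S)} \<union> {S. S \<subseteq> R \<and> odd (card S)}" by auto
  then have "moebius_sum g e R
      = (\<Sum>S | S \<subseteq> R \<and> even (card S). (-1) ^ card S * g (e div \<Prod>S))
      + (\<Sum>S | S \<subseteq> R \<and> odd (card S). (-1) ^ card S * g (e div \<Prod>S))"
    unfolding moebius_sum_def using assms by (simp add: sum.union_disjoint Int_def)
  also have "\<dots> = (\<Sum>S | S \<subseteq> R \<and> even (card S). g (e div \<Prod>S))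
      + (\<Sum>S | S \<subseteq> R \<and> odd (card S). - g (e div \<Prod>S))"
    by (intro arg_cong2[where f = "(+)"] sum.cong) auto
  finally show ?thesis by (simp add: sum_negf)
qed

lemma prime_dvd_div_prime:
  fixes r x e :: nat
  assumes "prime r" "prime x" "r \<noteq> x" "r dvd e" "x dvd e"
  shows "r dvd e div x"
proof -
  have "coprime r x" using assms primes_coprime by blast
  moreover have "r dvd x * (e div x)" using assms by simp
  ultimately show ?thesis by (meson coprime_dvd_mult_right_iff)
qed

lemma gcd_div_prime_div_prime:
  fixes e x r :: nat
  assumes "prime x" "prime r" "x \<noteq> r" "x dvd e" "r dvd e"
  shows "gcd (e div x) (e div r) = e div x div r"
proof -
  have "x * r dvd e" using assms by (simp add: divides_mult primes_coprime)
  then obtain k where k: "e = x * r * k" by auto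
  have "x > 0" "r > 0" using assms prime_gt_0_nat by auto
  moreover have "gcd (r * k) (x * k) = k"
    using primes_coprime[of r x] assms by (simp add: gcd_mult_right coprime_commute)
  ultimately show ?thesis using k by simp
qed

lemma Max_insert_0_insert:
  fixes X :: "'a::{linorder,zero} set"
  assumes "finite X"
  shows "Max (insert 0 (insert a X)) = max a (Max (insert 0 X))"
proof -
  have "insert 0 (insert a X) = insert a (insert 0 X)" by auto
  then show ?thesis using assms by simp
qed

lemma Max_insert_0_image_min:
  fixes f :: "'b \<Rightarrow> 'a::{linorder,zero}"
  assumes "finite R" "A \<ge> 0"
  shows "Max (insert 0 ((\<lambda>r. min A (f r)) ` R)) = min A (Max (insert 0 (f ` R)))"
  using assms(1)
proof (induction R rule: finite_induct)
  case (insert z R)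
  then show ?case
    by (simp add: Max_insert_0_insert del: Max_insert) (auto simp: min_def max_def)
qed (use assms in simp)

text \<open>If \<open>h\<close> turns gcds into minima, inclusion-exclusion collapses: only \<open>h e\<close> and the largest
  \<open>h (e div r)\<close> survive.\<close>

lemma moebius_sum_gcd_min:
  fixes h :: "nat \<Rightarrow> int"
  assumes h_gcd: "\<And>x y. x > 0 \<Longrightarrow> y > 0 \<Longrightarrow> h (gcd x y) = min (h x) (h y)"
    and h_nonneg: "\<And>x. h x \<ge> 0"
    and "finite R" "\<forall>r\<in>R. prime r \<and> r dvd e" "e > 0"
  shows "moebius_sum h e R = h e - Max (insert 0 ((\<lambda>r. h (e div r)) ` R))"
  using assms(3-5)
proof (induction R arbitrary: e rule: finite_induct)
  case (insert x R)
  have x: "prime x" "x dvd e" using insert.prems by auto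
  have ex: "e div x > 0" using x insert.prems(2) dvd_div_eq_0_iff[of x e] by simp
  have R: "\<forall>r\<in>R. prime r \<and> r dvd e div x"
  proof
    fix r assume "r \<in> R"
    then have "prime r" "r dvd e" "r \<noteq> x" using insert by auto
    then show "prime r \<and> r dvd e div x" using prime_dvd_div_prime x by blast
  qed
  have "h (e div x div r) = min (h (e div x)) (h (e div r))" if "r \<in> R" for r
  proof -
    have r: "prime r" "r dvd e" "r \<noteq> x" using insert that by auto
    then have "e div r > 0" using insert.prems(2) dvd_div_eq_0_iff[of r e] by simp
    then show ?thesis using h_gcd[OF ex] gcd_div_prime_div_prime[OF x(1) r(1) r(3)[symmetric] x(2) r(2)]
      by metis
  qed
  then have "(\<lambda>r. h (e div x div r)) ` R = (\<lambda>r. min (h (e div x)) (h (e div r))) ` R" by simp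
  moreover define M where "M = Max (insert 0 ((\<lambda>r. h (e div r)) ` R))"
  ultimately have "Max (insert 0 ((\<lambda>r. h (e div x div r)) ` R)) = min (h (e div x)) M"
    using Max_insert_0_image_min[OF insert.hyps(1) h_nonneg] by simp
  moreover have "Max (insert 0 ((\<lambda>r. h (e div r)) ` insert x R)) = max (h (e div x)) M"
    unfolding M_def using insert.hyps by (simp add: Max_insert_0_insert del: Max_insert)
  moreover have "moebius_sum h e R = h e - M"
    unfolding M_def using insert.IH[of e] insert.prems by simp
  ultimately show ?case
    unfolding moebius_sum_insert[OF insert.hyps] insert.IH[OF R ex] by (simp add: min_def max_def)
qed simp

lemma moebius_sum_of_nat:
  assumes "finite R" "\<forall>r\<in>R. prime r \<and> r dvd e"
  shows "moebius_sum real e R = real e * (\<Prod>r\<in>R. 1 - 1 / real r)"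
  using assms
proof (induction R arbitrary: e rule: finite_induct)
  case (insert x R)
  have x: "prime x" "x dvd e" using insert.prems by auto
  have R: "\<forall>r\<in>R. prime r \<and> r dvd e div x"
  proof
    fix r assume "r \<in> R"
    then have "prime r" "r dvd e" "r \<noteq> x" using insert by auto
    then show "prime r \<and> r dvd e div x" using prime_dvd_div_prime x by blast
  qed
  have "real (e div x) = real e / real x" "real x > 0"
    using x by (simp_all add: real_of_nat_div prime_gt_0_nat)
  then show ?case
    using insert.IH[OF R] insert.IH[of e] insert.prems insert.hyps
    by (simp add: moebius_sum_insert field_simps)
qed simp

section \<open>Cyclotomic values\<close>

text \<open>By the Moebius product formula, \<open>\<Phi>\<^sub>u(b) = cyclotomic_numer b u / cyclotomic_denom b u\<close>.\<close>

definition cyclotomic_numer :: "nat \<Rightarrow> nat \<Rightarrow> nat" where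
  "cyclotomic_numer b u = (\<Prod>S | S \<subseteq> prime_factors u \<and> even (card S). b ^ (u div \<Prod>S) - 1)"

definition cyclotomic_denom :: "nat \<Rightarrow> nat \<Rightarrow> nat" where
  "cyclotomic_denom b u = (\<Prod>S | S \<subseteq> prime_factors u \<and> odd (card S). b ^ (u div \<Prod>S) - 1)"

lemma prod_dvd_if_subset_prime_factors:
  fixes u :: nat
  assumes "u > 0" "S \<subseteq> prime_factors u"
  shows "\<Prod>S dvd u"
proof -
  have "\<Prod>S dvd (\<Prod>p\<in>prime_factors u. p ^ multiplicity p u)"
  proof (rule prod_dvd_prod_subset2[OF _ assms(2)])
    fix p assume "p \<in> S"
    then have "multiplicity p u \<ge> 1"
      using assms by (auto simp: prime_factors_multiplicity Suc_le_eq)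
    then show "p dvd p ^ multiplicity p u" by (simp add: dvd_power)
  qed simp
  then show ?thesis using assms by (simp add: prime_factorization_nat[symmetric])
qed

lemma div_prod_prime_factors_pos:
  fixes u :: nat
  assumes "u > 0" "S \<subseteq> prime_factors u"
  shows "u div \<Prod>S > 0"
  using prod_dvd_if_subset_prime_factors[OF assms] assms(1) dvd_div_eq_0_iff by fastforce

lemma inj_on_div_prod_prime_factors:
  fixes u :: nat
  assumes "u > 0"
  shows "inj_on (\<lambda>S. u div \<Prod>S) (Pow (prime_factors u))"
proof (rule inj_onI)
  fix S S' assume S: "S \<in> Pow (prime_factors u)" "S' \<in> Pow (prime_factors u)"
    and eq: "u div \<Prod>S = u div \<Prod>S'"
  have "\<Prod>T = u div (u div \<Prod>T)" if "T \<in> Pow (prime_factors u)" for T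
    using prod_dvd_if_subset_prime_factors[OF assms, of T] that assms by (auto elim!: dvdE)
  then have "\<Prod>S = u div (u div \<Prod>S)" "\<Prod>S' = u div (u div \<Prod>S')" using S by blast+
  then have "\<Prod>S = \<Prod>S'" using eq by simp
  moreover have "inj_on Prod (Pow (prime_factors u))"
    by (rule inj_on_Prod_primes) (auto dest: finite_subset)
  ultimately show "S = S'" using S by (auto dest: inj_onD)
qed

lemma cyclotomic_numer_neq_0:
  assumes "b \<ge> 2" "u > 0"
  shows "cyclotomic_numer b u \<noteq> 0"
  unfolding cyclotomic_numer_def
  using power_minus_one_neq_0[OF assms(1) div_prod_prime_factors_pos[OF assms(2)]] by simp

lemma cyclotomic_denom_neq_0:
  assumes "b \<ge> 2" "u > 0"
  shows "cyclotomic_denom b u \<noteq> 0"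
  unfolding cyclotomic_denom_def
  using power_minus_one_neq_0[OF assms(1) div_prod_prime_factors_pos[OF assms(2)]] by simp

lemma multiplicity_cyclotomic:
  assumes "b \<ge> 2" "u > 0" "prime q"
  shows "int (multiplicity q (cyclotomic_numer b u)) - int (multiplicity q (cyclotomic_denom b u))
           = moebius_sum (\<lambda>e. int (multiplicity q (b ^ e - 1))) u (prime_factors u)"
proof -
  have distrib: "multiplicity q (\<Prod>S | S \<subseteq> prime_factors u \<and> P (card S). b ^ (u div \<Prod>S) - 1)
          = (\<Sum>S | S \<subseteq> prime_factors u \<and> P (card S). multiplicity q (b ^ (u div \<Prod>S) - 1))"
    for P :: "nat \<Rightarrow> bool"
    using assms power_minus_one_neq_0[OF assms(1) div_prod_prime_factors_pos[OF assms(2)]]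
    by (intro prime_elem_multiplicity_prod_distrib) auto
  show ?thesis
    unfolding cyclotomic_numer_def cyclotomic_denom_def moebius_sum_parity_split[OF finite_set_mset]
    using distrib[of even] distrib[of odd] by simp
qed

lemma moebius_sum_multiplicity_power_minus_one:
  fixes b q u :: nat
  defines "h \<equiv> \<lambda>e. int (multiplicity q (b ^ e - 1))"
  assumes b: "b \<ge> 2" and q: "prime q" and u: "u > 0"
  shows "moebius_sum h u (prime_factors u) = h u - Max (insert 0 ((\<lambda>r. h (u div r)) ` prime_factors u))"
proof (rule moebius_sum_gcd_min)
  show "h (gcd x y) = min (h x) (h y)" if "x > 0" "y > 0" for x y
    unfolding h_def using multiplicity_power_minus_one_gcd[OF b q that] by (simp add: min_def)
qed (use u in \<open>auto simp: h_def\<close>)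

lemma moebius_sum_multiplicity_nonneg:
  fixes b q u :: nat
  assumes b: "b \<ge> 2" and q: "prime q" and u: "u > 0"
  shows "moebius_sum (\<lambda>e. int (multiplicity q (b ^ e - 1))) u (prime_factors u) \<ge> 0"
proof -
  have "multiplicity q (b ^ (u div r) - 1) \<le> multiplicity q (b ^ u - 1)"
    if "r \<in> prime_factors u" for r
  proof (rule dvd_imp_multiplicity_le)
    show "b ^ (u div r) - 1 dvd b ^ u - 1"
      using b that by (intro power_minus_one_dvd_power_minus_one) (auto elim!: dvdE)
  qed (rule power_minus_one_neq_0[OF b u])
  then have "Max (insert 0 ((\<lambda>r. int (multiplicity q (b ^ (u div r) - 1))) ` prime_factors u))
               \<le> int (multiplicity q (b ^ u - 1))"
    by (subst Max_le_iff) auto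
  then show ?thesis unfolding moebius_sum_multiplicity_power_minus_one[OF b q u] by simp
qed

lemma moebius_sum_multiplicity_ord:
  fixes b p :: nat
  assumes b: "b \<ge> 2" and p: "prime p" and "\<not> p dvd b"
  shows "moebius_sum (\<lambda>e. int (multiplicity p (b ^ e - 1))) (ord p b) (prime_factors (ord p b))
           = int (multiplicity p (b ^ ord p b - 1))"
proof -
  define u where "u = ord p b"
  have u: "u > 0" unfolding u_def using assms by (simp add: prime_imp_coprime)
  have "multiplicity p (b ^ (u div r) - 1) = 0" if r: "r \<in> prime_factors u" for r
  proof -
    have "u div r < u" using r u prime_gt_1_nat[of r] by (intro div_less_dividend) auto
    moreover have "u div r > 0" using r u dvd_div_eq_0_iff[of r u] by auto
    ultimately have "\<not> ord p b dvd u div r" unfolding u_def by (meson dvd_imp_le leD)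
    then have "\<not> p dvd b ^ (u div r) - 1" using dvd_power_minus_one_iff_ord_dvd[of b p] b by simp
    then show ?thesis by (rule not_dvd_imp_multiplicity_0)
  qed
  then have "insert 0 ((\<lambda>r. int (multiplicity p (b ^ (u div r) - 1))) ` prime_factors u) = {0}"
    by auto
  then show ?thesis
    unfolding u_def[symmetric] moebius_sum_multiplicity_power_minus_one[OF b p u]
    by (simp only: Max_singleton diff_zero)
qed

lemma prime_power_mult_cyclotomic_denom_dvd:
  fixes b p :: nat
  assumes b: "b \<ge> 2" and p: "prime p" and "\<not> p dvd b"
  shows "p ^ multiplicity p (b ^ ord p b - 1) * cyclotomic_denom b (ord p b)
           dvd cyclotomic_numer b (ord p b)"
proof -
  define u where "u = ord p b"
  have u: "u > 0" unfolding u_def using assms by (simp add: prime_imp_coprime)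
  have den: "cyclotomic_denom b u \<noteq> 0" by (rule cyclotomic_denom_neq_0[OF b u])
  have "multiplicity q (p ^ multiplicity p (b ^ u - 1) * cyclotomic_denom b u)
          \<le> multiplicity q (cyclotomic_numer b u)" if q: "prime q" for q
  proof (cases "q = p")
    case True
    then show ?thesis
      using multiplicity_cyclotomic[OF b u q] moebius_sum_multiplicity_ord[OF assms] p den
      unfolding u_def by (simp add: prime_elem_multiplicity_mult_distrib)
  next
    case False
    then show ?thesis
      using multiplicity_cyclotomic[OF b u q] moebius_sum_multiplicity_nonneg[OF b q u] p q den
      by (simp add: prime_elem_multiplicity_mult_distrib multiplicity_distinct_prime_power)
  qed
  then show ?thesis
    unfolding u_def[symmetric] using den p by (intro multiplicity_le_imp_dvd) (auto simp: prime_gt_0_nat)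
qed

lemma exp_minus_two_mult_le:
  fixes t :: real
  assumes "0 \<le> t" "t \<le> 1/2"
  shows "exp (- 2 * t) \<le> 1 - t"
proof -
  have "t * (2 * t) \<le> t * 1" using assms by (intro mult_left_mono) auto
  then have "- 2 * t \<le> - t - 2 * t\<^sup>2" by (simp add: power2_eq_square algebra_simps)
  also have "\<dots> \<le> ln (1 - t)" by (rule ln_one_minus_pos_lower_bound[OF assms])
  finally have "exp (- 2 * t) \<le> exp (ln (1 - t))" by simp
  then show ?thesis using assms by simp
qed

lemma sum_power_atLeast1_le:
  fixes x :: real
  assumes "0 \<le> x" "x \<le> 1/2"
  shows "(\<Sum>k=1..n. x ^ k) \<le> 1 - x ^ n"
proof (induction n)
  case (Suc n)
  have "2 * x * x ^ n \<le> 1 * x ^ n" using assms by (intro mult_right_mono) auto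
  then show ?case using Suc by simp
qed simp

lemma prod_power_minus_one_ge:
  fixes b :: nat and D :: "nat set"
  assumes b: "b \<ge> 2" and D: "finite D" "0 \<notin> D"
  shows "exp (-2) * real b ^ (\<Sum>D) \<le> (\<Prod>d\<in>D. real b ^ d - 1)"
proof -
  define t where "t d = (1 / real b) ^ d" for d
  have t: "0 \<le> t d" "t d \<le> 1/2" if "d \<in> D" for d
  proof -
    have "d \<ge> 1" using that D(2) by (cases d) auto
    then have "(1 / real b) ^ d \<le> (1 / real b) ^ 1" using b by (intro power_decreasing) auto
    also have "\<dots> \<le> 1/2" using b by (simp add: field_simps)
    finally show "t d \<le> 1/2" unfolding t_def .
  qed (simp add: t_def)
  have "D \<subseteq> {1..\<Sum>D}"
  proof
    fix d assume "d \<in> D"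
    then show "d \<in> {1..\<Sum>D}" using D by (cases d) (auto intro: member_le_sum)
  qed
  then have "(\<Sum>d\<in>D. t d) \<le> (\<Sum>k=1..\<Sum>D. (1 / real b) ^ k)"
    unfolding t_def by (intro sum_mono2) auto
  also have "\<dots> \<le> 1 - (1 / real b) ^ (\<Sum>D)" using b by (intro sum_power_atLeast1_le) auto
  also have "\<dots> \<le> 1" by simp
  finally have "(\<Sum>d\<in>D. t d) \<le> 1" .
  then have "exp (-2) \<le> exp (- 2 * (\<Sum>d\<in>D. t d))" by simp
  also have "\<dots> = (\<Prod>d\<in>D. exp (- 2 * t d))"
    by (simp add: exp_sum[OF D(1)] sum_distrib_left)
  also have "\<dots> \<le> (\<Prod>d\<in>D. 1 - t d)"
    using t exp_minus_two_mult_le by (intro prod_mono) auto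
  finally have "exp (-2) * real b ^ (\<Sum>D) \<le> (\<Prod>d\<in>D. 1 - t d) * (\<Prod>d\<in>D. real b ^ d)"
    by (simp add: power_sum mult_right_mono prod_nonneg)
  also have "\<dots> = (\<Prod>d\<in>D. real b ^ d - 1)"
    unfolding prod.distrib[symmetric] t_def using b by (intro prod.cong) (auto simp: field_simps)
  finally show ?thesis .
qed

lemma cyclotomic_numer_le_denom:
  assumes b: "b \<ge> 2" and u: "u > 0"
  shows "real (cyclotomic_numer b u) \<le> exp 2 * real b ^ totient u * real (cyclotomic_denom b u)"
proof -
  define d where "d S = u div \<Prod>S" for S
  define Ev Od where "Ev = {S. S \<subseteq> prime_factors u \<and> even (card S)}"
    and "Od = {S. S \<subseteq> prime_factors u \<and> odd (card S)}"
  have fin: "finite Ev" "finite Od" unfolding Ev_def Od_def by auto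
  have sums: "(\<Sum>S\<in>Ev. d S) = totient u + (\<Sum>S\<in>Od. d S)"
  proof -
    have "real (totient u) = moebius_sum real u (prime_factors u)"
      unfolding totient_formula2 by (rule moebius_sum_of_nat[symmetric]) auto
    then have "real (\<Sum>S\<in>Ev. d S) = real (totient u + (\<Sum>S\<in>Od. d S))"
      unfolding moebius_sum_parity_split[OF finite_set_mset] Ev_def Od_def d_def by simp
    then show ?thesis by (simp only: of_nat_eq_iff)
  qed
  have denom: "real b ^ (\<Sum>S\<in>Od. d S) \<le> exp 2 * real (cyclotomic_denom b u)"
  proof -
    have inj: "inj_on d Od"
      using inj_on_div_prod_prime_factors[OF u] unfolding d_def Od_def
      by (rule inj_on_subset) auto
    have "d S > 0" if "S \<in> Od" for S
      using that div_prod_prime_factors_pos[OF u] unfolding d_def Od_def by blast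
    then have "0 \<notin> d ` Od" by (metis imageE less_irrefl)
    then have "exp (-2) * real b ^ (\<Sum>(d ` Od)) \<le> (\<Prod>k\<in>d ` Od. real b ^ k - 1)"
      using fin by (intro prod_power_minus_one_ge[OF b]) auto
    also have "\<dots> = real (cyclotomic_denom b u)"
      unfolding cyclotomic_denom_def Od_def[symmetric] d_def[symmetric] prod.reindex[OF inj]
      using b by (simp add: of_nat_diff)
    finally have "exp 2 * (exp (-2) * real b ^ (\<Sum>S\<in>Od. d S)) \<le> exp 2 * real (cyclotomic_denom b u)"
      unfolding sum.reindex[OF inj] by (intro mult_left_mono) auto
    moreover have "exp 2 * (exp (-2) * x) = x" for x :: real
      by (simp add: mult.assoc[symmetric] exp_minus_inverse)
    ultimately show ?thesis by simp
  qed
  have "real (cyclotomic_numer b u) = (\<Prod>S\<in>Ev. real (b ^ d S - 1))"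
    unfolding cyclotomic_numer_def Ev_def[symmetric] d_def[symmetric] by simp
  also have "\<dots> \<le> (\<Prod>S\<in>Ev. real b ^ d S)"
    by (intro prod_mono) (auto simp: of_nat_diff)
  also have "\<dots> = real b ^ totient u * real b ^ (\<Sum>S\<in>Od. d S)"
    by (simp add: power_sum[symmetric] sums power_add)
  also have "\<dots> \<le> real b ^ totient u * (exp 2 * real (cyclotomic_denom b u))"
    using denom by (intro mult_left_mono) auto
  finally show ?thesis by (simp add: mult_ac)
qed

lemma prime_power_ord_le:
  fixes b p :: nat
  assumes b: "b \<ge> 2" and p: "prime p" and "\<not> p dvd b"
  shows "real (p ^ multiplicity p (b ^ ord p b - 1)) \<le> exp 2 * real b ^ totient (ord p b)"
proof -
  define u where "u = ord p b"
  have u: "u > 0" unfolding u_def using assms by (simp add: prime_imp_coprime)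
  have den: "real (cyclotomic_denom b u) > 0" using cyclotomic_denom_neq_0[OF b u] by simp
  have "real (p ^ multiplicity p (b ^ u - 1)) * real (cyclotomic_denom b u)
          \<le> real (cyclotomic_numer b u)"
    using prime_power_mult_cyclotomic_denom_dvd[OF assms] cyclotomic_numer_neq_0[OF b u]
    unfolding u_def[symmetric] of_nat_mult[symmetric] of_nat_le_iff
    by (intro dvd_imp_le) auto
  also have "\<dots> \<le> exp 2 * real b ^ totient u * real (cyclotomic_denom b u)"
    by (rule cyclotomic_numer_le_denom[OF b u])
  finally show ?thesis unfolding u_def[symmetric] using den by simp
qed

section \<open>Lifting the exponent\<close>

lemma power_minus_one_eq_nat:
  fixes x :: nat
  assumes "x \<ge> 1"
  shows "x ^ n - 1 = (x - 1) * (\<Sum>i<n. x ^ i)"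
proof -
  have "int (x ^ n - 1) = int x ^ n - 1" using assms by (simp add: of_nat_diff)
  also have "\<dots> = (int x - 1) * (\<Sum>i<n. int x ^ i)" by (rule power_diff_1_eq)
  also have "\<dots> = int ((x - 1) * (\<Sum>i<n. x ^ i))" using assms by (simp add: of_nat_diff)
  finally show ?thesis by linarith
qed

lemma prime_dvd_sum_powers_iff:
  fixes x p :: nat
  assumes "x \<ge> 1" "p dvd x - 1"
  shows "p dvd (\<Sum>i<k. x ^ i) \<longleftrightarrow> p dvd k"
proof -
  have "int p dvd int x - 1" using assms of_nat_dvd_iff[of p "x - 1"] by (simp add: of_nat_diff)
  then have "int p dvd int x ^ i - 1" for i
    using power_diff_1_eq[of "int x" i] by (simp add: dvd_mult2)
  then have D: "int p dvd (\<Sum>i<k. int x ^ i) - int k"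
    using dvd_sum[of "{..<k}" "int p" "\<lambda>i. int x ^ i - 1"] by (simp add: sum_subtractf)
  have "int p dvd (\<Sum>i<k. int x ^ i) \<longleftrightarrow> int p dvd int k"
  proof
    assume "int p dvd (\<Sum>i<k. int x ^ i)"
    from dvd_diff[OF this D] show "int p dvd int k" by simp
  next
    assume "int p dvd int k"
    from dvd_add[OF D this] show "int p dvd (\<Sum>i<k. int x ^ i)" by simp
  qed
  moreover have "int (\<Sum>i<k. x ^ i) = (\<Sum>i<k. int x ^ i)" by simp
  ultimately show ?thesis by (metis of_nat_dvd_iff)
qed

text \<open>With \<open>x = 1 + p t\<close>, expanding binomially gives
  \<open>\<Sum>i<n. x ^ i \<equiv> n + p t n (n - 1) / 2 (mod p\<^sup>2)\<close>; the factor 2 keeps everything integral.\<close>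

lemma prime_square_dvd_sum_powers_congruence:
  fixes p t :: int
  shows "p\<^sup>2 dvd 2 * (\<Sum>i<n. (1 + p * t) ^ i) - 2 * int n - p * t * int n * (int n - 1)"
proof -
  have pow: "p\<^sup>2 dvd (1 + p * t) ^ i - 1 - int i * p * t" for i
  proof (induction i)
    case (Suc i)
    have "(1 + p * t) ^ Suc i - 1 - int (Suc i) * p * t
        = ((1 + p * t) ^ i - 1 - int i * p * t) * (1 + p * t) + p\<^sup>2 * (int i * t * t)"
      by (simp add: algebra_simps power2_eq_square)
    moreover have "p\<^sup>2 dvd ((1 + p * t) ^ i - 1 - int i * p * t) * (1 + p * t) + p\<^sup>2 * (int i * t * t)"
      using Suc by (intro dvd_add dvd_mult2) auto
    ultimately show ?case by (simp only:)
  qed simp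
  show ?thesis
  proof (induction n)
    case (Suc n)
    have "2 * (\<Sum>i<Suc n. (1 + p * t) ^ i) - 2 * int (Suc n) - p * t * int (Suc n) * (int (Suc n) - 1)
        = (2 * (\<Sum>i<n. (1 + p * t) ^ i) - 2 * int n - p * t * int n * (int n - 1))
          + 2 * ((1 + p * t) ^ n - 1 - int n * p * t)"
      by (simp add: algebra_simps)
    moreover have "p\<^sup>2 dvd (2 * (\<Sum>i<n. (1 + p * t) ^ i) - 2 * int n - p * t * int n * (int n - 1))
          + 2 * ((1 + p * t) ^ n - 1 - int n * p * t)"
      using Suc pow[of n] by (intro dvd_add dvd_mult)
    ultimately show ?case by (simp only:)
  qed simp
qed

lemma not_prime_square_dvd_sum_powers:
  fixes x p :: nat
  assumes p: "prime p" "odd p" and x: "x \<ge> 1" "p dvd x - 1"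
  shows "\<not> p\<^sup>2 dvd (\<Sum>i<p. x ^ i)"
proof
  assume "p\<^sup>2 dvd (\<Sum>i<p. x ^ i)"
  define P where "P = int p"
  obtain t where "x - 1 = p * t" using x by auto
  then have "x = 1 + p * t" using x by linarith
  then have x_eq: "int x = 1 + P * int t" unfolding P_def by simp
  have "P\<^sup>2 dvd int (\<Sum>i<p. x ^ i)" unfolding P_def using \<open>p\<^sup>2 dvd _\<close> by (metis of_nat_dvd_iff of_nat_power)
  then have "P\<^sup>2 dvd 2 * (\<Sum>i<p. (1 + P * int t) ^ i)" unfolding x_eq[symmetric] by simp
  moreover have "P\<^sup>2 dvd 2 * (\<Sum>i<p. (1 + P * int t) ^ i) - 2 * P - P\<^sup>2 * (int t * (P - 1))"
    using prime_square_dvd_sum_powers_congruence[of P "int t" p] unfolding P_def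
    by (simp add: power2_eq_square algebra_simps)
  then have "P\<^sup>2 dvd (2 * (\<Sum>i<p. (1 + P * int t) ^ i) - 2 * P - P\<^sup>2 * (int t * (P - 1)))
                + P\<^sup>2 * (int t * (P - 1))"
    by (rule dvd_add) simp
  then have "P\<^sup>2 dvd 2 * (\<Sum>i<p. (1 + P * int t) ^ i) - 2 * P" by simp
  ultimately have "P\<^sup>2 dvd 2 * (\<Sum>i<p. (1 + P * int t) ^ i) - (2 * (\<Sum>i<p. (1 + P * int t) ^ i) - 2 * P)"
    by (rule dvd_diff)
  then have "P * P dvd P * 2" by (simp add: power2_eq_square mult.commute)
  moreover have "P \<noteq> 0" unfolding P_def using p(1) by simp
  ultimately have "P dvd 2" by simp
  then have "p dvd 2" unfolding P_def by (metis of_nat_dvd_iff of_nat_numeral)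
  then have "p \<le> 2" by (rule dvd_imp_le) simp
  then have "p = 2" using prime_ge_2_nat[OF p(1)] by simp
  then show False using p(2) by simp
qed

lemma multiplicity_sum_powers_le_1:
  fixes y p :: nat
  assumes p: "prime p" and y: "y \<ge> 1" "p dvd y - 1" and "odd p \<or> 4 dvd y - 1"
  shows "multiplicity p (\<Sum>i<p. y ^ i) \<le> 1"
proof -
  have "\<not> p\<^sup>2 dvd (\<Sum>i<p. y ^ i)"
  proof (cases "odd p")
    case True
    then show ?thesis using not_prime_square_dvd_sum_powers[OF p True y] by simp
  next
    case False
    then have p2: "p = 2" using primes_dvd_imp_eq[OF two_is_prime_nat p] by simp
    obtain s where "y - 1 = 4 * s" using False assms(4) by auto
    then have "(\<Sum>i<p. y ^ i) = 2 + 4 * s" unfolding p2 using y by (simp add: numeral_2_eq_2)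
    moreover have "\<not> (4::nat) dvd 2 + 4 * s" by presburger
    ultimately show ?thesis unfolding p2 by (simp add: power2_eq_square)
  qed
  moreover have "(\<Sum>i<p. y ^ i) \<noteq> 0" using y prime_gt_0_nat[OF p] by (auto simp: sum_eq_0_iff)
  ultimately have "multiplicity p (\<Sum>i<p. y ^ i) < 2"
    using p by (intro multiplicity_lessI) (auto simp: not_prime_unit)
  then show ?thesis by simp
qed

lemma multiplicity_power_minus_one_le:
  fixes p x k :: nat
  assumes p: "prime p" and x: "x \<ge> 1" "p dvd x - 1" and c: "odd p \<or> 4 dvd x - 1" and "k \<ge> 1"
  shows "multiplicity p (x ^ k - 1) \<le> multiplicity p (x - 1) + multiplicity p k"
  using assms(5)
proof (induction k rule: less_induct)
  case (less k)
  show ?case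
  proof (cases "x = 1")
    case False
    then have x2: "x \<ge> 2" using x by simp
    have ne: "x ^ j - 1 \<noteq> 0" if "j > 0" for j using power_minus_one_neq_0[OF x2 that] .
    show ?thesis
    proof (cases "p dvd k")
      case False
      then have "multiplicity p (\<Sum>i<k. x ^ i) = 0"
        using prime_dvd_sum_powers_iff[OF x] by (simp add: not_dvd_imp_multiplicity_0)
      moreover have "(\<Sum>i<k. x ^ i) \<noteq> 0" using x2 less.prems by (auto simp: sum_eq_0_iff Suc_le_eq)
      ultimately show ?thesis
        unfolding power_minus_one_eq_nat[OF x(1), of k] using p ne[of 1]
        by (simp add: prime_elem_multiplicity_mult_distrib)
    next
      case True
      then obtain k' where k': "k = p * k'" by auto
      have k'1: "k' \<ge> 1" using k' less.prems by (cases k') auto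
      have smaller: "k' < k" using k' k'1 prime_gt_1_nat[OF p] by simp
      define y where "y = x ^ k'"
      have y: "y \<ge> 1" unfolding y_def using x by simp
      have "x - 1 dvd y - 1" unfolding y_def using power_minus_one_eq_nat[OF x(1), of k'] by simp
      then have y_cong: "p dvd y - 1" "odd p \<or> 4 dvd y - 1" using x(2) c dvd_trans by blast+
      have y_ne: "y - 1 \<noteq> 0" unfolding y_def using ne k'1 by simp
      have split: "x ^ k - 1 = (y - 1) * (\<Sum>i<p. y ^ i)"
        using power_minus_one_eq_nat[OF y, of p] by (simp add: k' y_def power_mult mult.commute)
      then have "(\<Sum>i<p. y ^ i) \<noteq> 0" using ne[of k] less.prems by auto
      then have "multiplicity p (x ^ k - 1) = multiplicity p (y - 1) + multiplicity p (\<Sum>i<p. y ^ i)"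
        unfolding split using p y_ne by (intro prime_elem_multiplicity_mult_distrib) auto
      also have "\<dots> \<le> multiplicity p (x - 1) + multiplicity p k' + 1"
        using less.IH[OF smaller k'1] multiplicity_sum_powers_le_1[OF p y y_cong] unfolding y_def
        by simp
      also have "\<dots> = multiplicity p (x - 1) + multiplicity p k"
        unfolding k' using p k'1 by (simp add: prime_elem_multiplicity_mult_distrib)
      finally show ?thesis .
    qed
  qed simp
qed

section \<open>Prime powers dividing \<open>b ^ T - 1\<close>\<close>

lemma prime_power_multiplicity_le:
  fixes p m :: nat
  assumes "m \<noteq> 0"
  shows "p ^ multiplicity p m \<le> m"
  using assms by (intro dvd_imp_le multiplicity_dvd) auto

lemma odd_prime_power_power_minus_one_le:
  fixes b p T :: nat
  assumes b: "b \<ge> 2" and p: "prime p" "odd p" "\<not> p dvd b" and pT: "p dvd b ^ T - 1" and T: "T \<ge> 1"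
  shows "real (p ^ multiplicity p (b ^ T - 1)) \<le> exp 2 * real b ^ totient T * real T"
proof -
  define u where "u = ord p b"
  have uT: "u dvd T" unfolding u_def using pT dvd_power_minus_one_iff_ord_dvd[of b p T] b by simp
  have u0: "u > 0" unfolding u_def using p by (simp add: prime_imp_coprime)
  define k where "k = T div u"
  have Tk: "T = u * k" unfolding k_def using uT by simp
  have k1: "k \<ge> 1" using Tk T by (cases k) auto
  have "k \<le> T" using Tk u0 by simp
  define x where "x = b ^ u"
  have x1: "x \<ge> 1" unfolding x_def using b by simp
  have px: "p dvd x - 1"
    unfolding x_def u_def using dvd_power_minus_one_iff_ord_dvd[of b p "ord p b"] b by simp
  have "multiplicity p (x ^ k - 1) \<le> multiplicity p (x - 1) + multiplicity p k"
    using multiplicity_power_minus_one_le[OF p(1) x1 px _ k1] p(2) by simp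
  moreover have "x ^ k = b ^ T" unfolding x_def Tk by (simp add: power_mult)
  ultimately have "multiplicity p (b ^ T - 1) \<le> multiplicity p (b ^ u - 1) + multiplicity p k"
    unfolding x_def by simp
  then have "real (p ^ multiplicity p (b ^ T - 1))
               \<le> real (p ^ (multiplicity p (b ^ u - 1) + multiplicity p k))"
    using power_increasing prime_ge_1_nat[OF p(1)] by (simp only: of_nat_le_iff)
  also have "\<dots> = real (p ^ multiplicity p (b ^ u - 1)) * real (p ^ multiplicity p k)"
    by (simp add: power_add)
  also have "\<dots> \<le> (exp 2 * real b ^ totient u) * real T"
  proof (rule mult_mono)
    show "real (p ^ multiplicity p (b ^ u - 1)) \<le> exp 2 * real b ^ totient u"
      unfolding u_def by (rule prime_power_ord_le[OF b p(1,3)])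
    show "real (p ^ multiplicity p k) \<le> real T"
      using prime_power_multiplicity_le[of k p] k1 \<open>k \<le> T\<close> by simp
  qed auto
  also have "\<dots> \<le> exp 2 * real b ^ totient T * real T"
    using b totient_dvd_mono[OF uT] T by (intro mult_right_mono mult_left_mono power_increasing) auto
  finally show ?thesis .
qed

lemma two_power_power_minus_one_le:
  fixes b T :: nat
  assumes b: "odd b" "b \<ge> 2" and T: "T \<ge> 1"
  shows "2 ^ multiplicity 2 (b ^ T - 1) \<le> (b\<^sup>2 - 1) * T"
proof -
  obtain c where c: "b = 2 * c + 1" using b(1) by (metis oddE)
  define x where "x = b\<^sup>2"
  have x1: "x \<ge> 1" unfolding x_def using b by simp
  have x4: "x - 1 = 4 * (c * c + c)" unfolding x_def c by (simp add: power2_eq_square algebra_simps)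
  have "2 dvd x - 1" "4 dvd x - 1" unfolding x4 by simp_all
  then have "multiplicity 2 (x ^ T - 1) \<le> multiplicity 2 (x - 1) + multiplicity 2 T"
    by (intro multiplicity_power_minus_one_le[OF two_is_prime_nat x1 _ _ T]) auto
  moreover have "b ^ T - 1 dvd x ^ T - 1"
    unfolding x_def power_mult[symmetric]
    using b by (intro power_minus_one_dvd_power_minus_one) auto
  moreover have "x ^ T - 1 \<noteq> 0"
    unfolding x_def power_mult[symmetric] using b T by (intro power_minus_one_neq_0) auto
  ultimately have "multiplicity 2 (b ^ T - 1) \<le> multiplicity 2 (x - 1) + multiplicity 2 T"
    using dvd_imp_multiplicity_le by (meson le_trans)
  then have "(2::nat) ^ multiplicity 2 (b ^ T - 1) \<le> 2 ^ multiplicity 2 (x - 1) * 2 ^ multiplicity 2 T"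
    by (simp only: power_add[symmetric] power_increasing one_le_numeral)
  also have "\<dots> \<le> (x - 1) * T"
    using prime_power_multiplicity_le[of "x - 1" 2] prime_power_multiplicity_le[of T 2] x4 b T c
    by (intro mult_mono) auto
  finally show ?thesis unfolding x_def .
qed

lemma prime_power_power_minus_one_le:
  fixes b p T :: nat
  assumes b: "b \<ge> 2" and p: "prime p" and T: "T \<ge> 1"
  shows "real (p ^ multiplicity p (b ^ T - 1)) \<le> 9 * real b ^ (totient T + 2) * real T"
proof (cases "p dvd b ^ T - 1")
  case False
  have "1 * 1 \<le> real b ^ (totient T + 2) * real T"
    using b T by (intro mult_mono one_le_power) auto
  then show ?thesis using False by (simp add: not_dvd_imp_multiplicity_0)
next
  case pT: True
  have b2: "real b ^ 2 \<le> real b ^ (totient T + 2)" using b by (intro power_increasing) auto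
  have "\<not> p dvd b"
  proof
    assume "p dvd b"
    then have "p dvd b ^ T" using T dvd_power_le[of p b 1 T] by simp
    then have "p dvd b ^ T - (b ^ T - 1)" using pT by (rule dvd_diff_nat)
    then show False using b p by simp
  qed
  show ?thesis
  proof (cases "p = 2")
    case True
    then have "odd b" using \<open>\<not> p dvd b\<close> by simp
    then have "real (p ^ multiplicity p (b ^ T - 1)) \<le> real ((b\<^sup>2 - 1) * T)"
      using two_power_power_minus_one_le[OF \<open>odd b\<close> b T] True by (simp only: of_nat_le_iff)
    also have "\<dots> = real (b\<^sup>2 - 1) * real T" by simp
    also have "\<dots> \<le> 9 * real b ^ (totient T + 2) * real T"
    proof (rule mult_right_mono)
      have "real (b\<^sup>2 - 1) \<le> real b ^ 2" by simp
      then show "real (b\<^sup>2 - 1) \<le> 9 * real b ^ (totient T + 2)" using b2 by linarith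
    qed simp
    finally show ?thesis .
  next
    case False
    then have "odd p" using prime_odd_nat[OF p] prime_ge_2_nat[OF p] by simp
    have "exp (2::real) = exp 1 * exp 1" by (simp flip: exp_add)
    also have "\<dots> \<le> 3 * 3" using exp_le by (intro mult_mono) auto
    finally have "exp (2::real) \<le> 9" by simp
    moreover have "real b ^ totient T \<le> real b ^ (totient T + 2)"
      using b by (intro power_increasing) auto
    ultimately have "exp 2 * real b ^ totient T \<le> 9 * real b ^ (totient T + 2)"
      by (intro mult_mono) auto
    then show ?thesis
      using odd_prime_power_power_minus_one_le[OF b p \<open>odd p\<close> \<open>\<not> p dvd b\<close> pT T]
      by (meson mult_right_mono of_nat_0_le_iff order_trans)
  qed
qed

lemma power_minus_one_dvd_lcm_upto:
  fixes b T n :: nat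
  assumes b: "b \<ge> 2" and T: "T \<ge> 1" and n: "9 * real b ^ (totient T + 2) * real T \<le> real n"
  shows "b ^ T - 1 dvd lcm_upto n"
proof (rule dvd_lcm_upto)
  show "b ^ T - 1 > 0" using power_minus_one_neq_0[OF b, of T] T by simp
  fix p :: nat assume "prime p"
  then have "real (p ^ multiplicity p (b ^ T - 1)) \<le> real n"
    using prime_power_power_minus_one_le[OF b _ T] n by (meson order_trans)
  then show "p ^ multiplicity p (b ^ T - 1) \<le> n" by (simp only: of_nat_le_iff)
qed

lemma digit_sums_ge:
  fixes b T n :: nat
  assumes b: "b \<ge> 2" and T: "T \<ge> 1" and n: "9 * real b ^ (totient T + 2) * real T \<le> real n"
  shows "T \<le> digit_sum b (fact n)" "T \<le> digit_sum b (lcm_upto n)"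
proof -
  have "1 * T \<le> (b - 1) * T" using b by (intro mult_le_mono1) simp
  then have "T \<le> (b - 1) * T" by simp
  moreover have "b ^ T - 1 dvd lcm_upto n" by (rule power_minus_one_dvd_lcm_upto[OF assms])
  ultimately show "T \<le> digit_sum b (lcm_upto n)"
    using digit_sum_ge_if_dvd[OF b T lcm_upto_pos] by (meson le_trans)
  show "T \<le> digit_sum b (fact n)"
    using \<open>T \<le> (b - 1) * T\<close> digit_sum_ge_if_dvd[OF b T _ dvd_trans[OF \<open>b ^ T - 1 dvd _\<close> lcm_upto_dvd_fact]]
    by (meson fact_gt_zero le_trans)
qed

section \<open>Numbers with small totient\<close>

lemma inverse_of_nat_eq_prod_prime_powers:
  fixes k :: nat and P :: "nat set"
  assumes P: "finite P" "\<forall>p\<in>P. prime p" and k: "k > 0" "prime_factors k \<subseteq> P"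
  shows "1 / real k = (\<Prod>p\<in>P. (1 / real p) ^ multiplicity p k)"
proof -
  have "k = (\<Prod>p\<in>prime_factors k. p ^ multiplicity p k)" using k by (intro prime_factorization_nat)
  also have "\<dots> = (\<Prod>p\<in>P. p ^ multiplicity p k)"
    using P k by (intro prod.mono_neutral_left) (auto simp: prime_factors_multiplicity)
  finally have "real k = real (\<Prod>p\<in>P. p ^ multiplicity p k)" by (rule arg_cong)
  then have "real k = (\<Prod>p\<in>P. real p ^ multiplicity p k)" by (simp only: of_nat_prod of_nat_power)
  then have "(\<Prod>p\<in>P. (1 / real p) ^ multiplicity p k) * real k
      = (\<Prod>p\<in>P. (1 / real p) ^ multiplicity p k * real p ^ multiplicity p k)"
    by (simp add: prod.distrib)
  also have "\<dots> = 1" using P by (intro prod.neutral) (auto simp: power_one_over prime_gt_0_nat)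
  finally show ?thesis using k by (simp add: field_simps)
qed

lemma harm_le_prod_sum_powers:
  fixes y :: nat and P :: "nat set"
  assumes P: "finite P" "\<forall>p\<in>P. prime p" and y: "\<forall>k\<in>{1..y}. prime_factors k \<subseteq> P"
  shows "harm y \<le> (\<Prod>p\<in>P. \<Sum>j<Suc y. (1 / real p) ^ j)"
proof -
  define f where "f k = restrict (\<lambda>p. multiplicity p k) P" for k :: nat
  have f: "f k \<in> PiE P (\<lambda>_. {..<Suc y})" if k: "k \<in> {1..y}" for k
  proof -
    have "multiplicity p k < Suc y" if p: "p \<in> P" for p
    proof -
      have "multiplicity p k < 2 ^ multiplicity p k" by (rule less_exp)
      also have "\<dots> \<le> p ^ multiplicity p k" using P p prime_ge_2_nat by (intro power_mono) auto
      also have "\<dots> \<le> k" using k by (intro dvd_imp_le multiplicity_dvd) auto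
      finally show ?thesis using k by simp
    qed
    then show ?thesis unfolding f_def by auto
  qed
  have "inj_on f {1..y}"
  proof (rule inj_onI)
    fix k k' assume k: "k \<in> {1..y}" "k' \<in> {1..y}" "f k = f k'"
    have "multiplicity p k = multiplicity p k'" if "prime p" for p
    proof (cases "p \<in> P")
      case True
      then show ?thesis using k(3) unfolding f_def by (metis restrict_apply')
    next
      case False
      then have "p \<notin> prime_factors k" "p \<notin> prime_factors k'" using y k by auto
      then show ?thesis using that k by (auto simp: prime_factors_multiplicity)
    qed
    then show "k = k'" using k by (metis multiplicity_eq_imp_eq atLeastAtMost_iff not_one_le_zero
          normalize_nat_def id_apply)
  qed
  have "harm y = (\<Sum>k\<in>{1..y}. \<Prod>p\<in>P. (1 / real p) ^ f k p)"
    unfolding harm_def using inverse_of_nat_eq_prod_prime_powers[OF P] y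
    by (intro sum.cong) (auto simp: f_def inverse_eq_divide)
  also have "\<dots> = (\<Sum>g\<in>f ` {1..y}. \<Prod>p\<in>P. (1 / real p) ^ g p)"
    by (subst sum.reindex[OF \<open>inj_on f _\<close>]) simp
  also have "\<dots> \<le> (\<Sum>g\<in>PiE P (\<lambda>_. {..<Suc y}). \<Prod>p\<in>P. (1 / real p) ^ g p)"
  proof (rule sum_mono2)
    show "f ` {1..y} \<subseteq> PiE P (\<lambda>_. {..<Suc y})" using f by blast
  qed (auto simp: P intro!: finite_PiE prod_nonneg)
  also have "\<dots> = (\<Prod>p\<in>P. \<Sum>j<Suc y. (1 / real p) ^ j)"
    by (rule prod_sum_PiE[symmetric]) (auto simp: P)
  finally show ?thesis .
qed

lemma harm_mult_prod_le_1:
  fixes y :: nat and P :: "nat set"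
  assumes P: "finite P" "\<forall>p\<in>P. prime p" and y: "\<forall>k\<in>{1..y}. prime_factors k \<subseteq> P"
  shows "harm y * (\<Prod>p\<in>P. 1 - 1 / real p) \<le> 1"
proof -
  have p: "0 \<le> 1 / real p" "1 / real p \<le> 1" if "p \<in> P" for p
    using P that prime_ge_1_nat[of p] by auto
  have "harm y * (\<Prod>p\<in>P. 1 - 1 / real p)
          \<le> (\<Prod>p\<in>P. \<Sum>j<Suc y. (1 / real p) ^ j) * (\<Prod>p\<in>P. 1 - 1 / real p)"
    using harm_le_prod_sum_powers[OF assms] p by (intro mult_right_mono prod_nonneg) auto
  also have "\<dots> = (\<Prod>p\<in>P. (1 - 1 / real p) * (\<Sum>j<Suc y. (1 / real p) ^ j))"
    by (simp add: prod.distrib mult.commute)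
  also have "\<dots> = (\<Prod>p\<in>P. 1 - (1 / real p) ^ Suc y)"
    by (intro prod.cong refl) (simp only: one_diff_power_eq)
  also have "\<dots> \<le> 1"
  proof (intro prod_le_1 conjI)
    fix p assume "p \<in> P"
    then show "0 \<le> 1 - (1 / real p) ^ Suc y" "1 - (1 / real p) ^ Suc y \<le> 1"
      using p[of p] power_le_one[of "1 / real p" "Suc y"] by auto
  qed
  finally show ?thesis .
qed

lemma totient_mult_le:
  fixes m N :: nat
  assumes "m \<ge> 1" "N \<ge> 1"
  shows "real (totient (m * N)) \<le> real m * real (totient N)"
proof -
  define A B where "A = prime_factors (m * N)" and "B = prime_factors N"
  have BA: "B \<subseteq> A" unfolding A_def B_def using assms by (intro dvd_prime_factors) auto
  have factor: "0 \<le> 1 - 1 / real p \<and> 1 - 1 / real p \<le> 1" if "p \<in> A" for p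
  proof -
    have "real p \<ge> 1" using that prime_ge_1_nat[of p] unfolding A_def by auto
    then show ?thesis by (simp add: field_simps)
  qed
  have "(\<Prod>p\<in>A. 1 - 1 / real p) = (\<Prod>p\<in>A - B. 1 - 1 / real p) * (\<Prod>p\<in>B. 1 - 1 / real p)"
    unfolding A_def using BA A_def by (intro prod.subset_diff) auto
  also have "\<dots> \<le> (\<Prod>p\<in>B. 1 - 1 / real p)"
    using factor BA by (intro mult_left_le_one_le prod_le_1 prod_nonneg) auto
  finally show ?thesis
    unfolding totient_formula2 A_def[symmetric] B_def[symmetric]
    by (simp add: mult.assoc mult_left_mono)
qed

lemma harm_mult_totient_fact_le:
  "harm y * real (totient (fact y)) \<le> real (fact y :: nat)"
proof -
  have "prime_factors k \<subseteq> prime_factors (fact y :: nat)" if "k \<in> {1..y}" for k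
    using that by (intro dvd_prime_factors dvd_fact) auto
  then have "harm y * (\<Prod>p\<in>prime_factors (fact y :: nat). 1 - 1 / real p) \<le> 1"
    by (intro harm_mult_prod_le_1) auto
  then show ?thesis
    unfolding totient_formula2 by (simp add: mult_left_le mult.left_commute)
qed

text \<open>The witnesses \<open>T = m \<cdot> y!\<close> share the large ratio \<open>y!/\<phi>(y!) \<ge> H\<^sub>y\<close>.\<close>

lemma exists_multiple_of_fact_totient_le:
  fixes y K :: nat
  assumes K: "fact y \<le> K"
  shows "\<exists>T. T \<ge> 1 \<and> totient T \<le> K \<and> T \<le> K * fact y \<and> real K * harm y - fact y \<le> real T"
proof -
  define N :: nat where "N = fact y"
  define m r where "m = K div totient N" and "r = K mod totient N"
  have phi: "totient N \<ge> 1" "totient N \<le> N" unfolding N_def by (simp_all add: Suc_le_eq totient_le)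
  have m: "m \<ge> 1" unfolding m_def using phi K unfolding N_def by (simp add: div_greater_zero_iff Suc_le_eq)
  have K_split: "K = m * totient N + r" and r: "r < totient N" unfolding m_def r_def using phi by simp_all
  have "real (totient (m * N)) \<le> real m * real (totient N)"
    using m N_def by (intro totient_mult_le) auto
  also have "\<dots> \<le> real K" unfolding K_split by simp
  finally have totient: "totient (m * N) \<le> K" by simp
  have "m * 1 \<le> m * totient N" using phi by (intro mult_le_mono2)
  then have "m \<le> K" unfolding K_split by linarith
  then have upper: "m * N \<le> K * fact y" unfolding N_def by simp
  have "real K - real (totient N) \<le> real m * real (totient N)"
    unfolding K_split using r by simp
  then have "harm y * (real K - real (totient N)) \<le> harm y * (real m * real (totient N))"
    by (intro mult_left_mono harm_nonneg)
  then have "real K * harm y - harm y * real (totient N) \<le> real m * (harm y * real (totient N))"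
    by (simp add: algebra_simps)
  also have "\<dots> \<le> real (m * N)"
    using harm_mult_totient_fact_le[of y] unfolding N_def by (simp add: mult_left_mono)
  finally have "real K * harm y - fact y \<le> real (m * N)"
    using harm_mult_totient_fact_le[of y] unfolding N_def by simp
  then show ?thesis using m totient upper N_def by (intro exI[of _ "m * N"]) auto
qed

lemma real_lt_nat_floor_add_one: "x < real (nat \<lfloor>x\<rfloor>) + 1"
  by (cases "x \<ge> 0") linarith+

lemma exists_totient_le_ln_ln:
  fixes K :: nat
  assumes K3: "real K \<ge> 3" and K: "sqrt (ln K) * ln (sqrt (ln K)) + ln 2 \<le> ln K"
  shows "\<exists>T. T \<ge> 1 \<and> totient T \<le> K \<and> T \<le> K\<^sup>2 \<and> real K * ln (ln (real K)) \<le> 4 * real T"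
proof -
  define s where "s = sqrt (ln (real K))"
  define y where "y = nat \<lfloor>s\<rfloor>"
  have "exp 1 \<le> real K" using K3 exp_le by linarith
  then have lnK: "ln (real K) \<ge> 1" using K3 by (subst ln_ge_iff) auto
  then have s: "s \<ge> 1" unfolding s_def by simp
  have y: "real y \<le> s" "s < real y + 1" "y \<ge> 1"
    unfolding y_def using s of_nat_floor[of s] real_lt_nat_floor_add_one[of s]
    by (auto simp: le_nat_floor)
  have "(fact y :: real) \<le> real (y ^ y)" by (rule fact_le_power)
  also have "\<dots> = exp (real y * ln (real y))" using y by (simp add: powr_def powr_realpow[symmetric])
  also have "\<dots> \<le> exp (s * ln s)" using y by (intro exp_mono mult_mono) auto
  also have "\<dots> \<le> exp (ln (real K) - ln 2)" using K unfolding s_def by simp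
  also have "\<dots> = real K / 2" using K3 by (simp add: exp_diff)
  finally have fact_y: "real (fact y) \<le> real K / 2" by simp
  then have "fact y \<le> K" by linarith
  then obtain T where T: "T \<ge> 1" "totient T \<le> K" "T \<le> K * fact y"
    and harm: "real K * harm y - fact y \<le> real T"
    using exists_multiple_of_fact_totient_le by blast
  have "T \<le> K\<^sup>2" using T(3) \<open>fact y \<le> K\<close> by (simp add: power2_eq_square le_trans)
  have "ln (ln (real K)) / 2 = ln s" unfolding s_def using lnK by (simp add: ln_sqrt)
  also have "\<dots> \<le> ln (real y + 1)" using y s by (intro ln_mono) auto
  also have "\<dots> \<le> harm y" by (rule ln_le_harm)
  finally have "real K * ln (ln (real K)) \<le> 2 * real K * harm y" using K3 by (simp add: mult_left_mono)
  moreover have "harm y \<ge> (1 :: real)" using harm_mono[of 1 y] y by (simp add: harm_def)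
  then have "real K \<le> real K * harm y" using K3 by simp
  ultimately show ?thesis using T \<open>T \<le> K\<^sup>2\<close> harm fact_y by (intro exI[of _ T]) auto
qed

lemma eventually_exists_totient_le:
  "\<forall>\<^sub>F K in sequentially.
     \<exists>T. T \<ge> 1 \<and> totient T \<le> K \<and> T \<le> K\<^sup>2 \<and> real K * ln (ln (real K)) \<le> 4 * real T"
proof -
  have "\<forall>\<^sub>F x in at_top. sqrt (ln x) * ln (sqrt (ln x)) + ln 2 \<le> ln (x :: real)" by real_asymp
  moreover have "\<forall>\<^sub>F x in at_top. (3 :: real) \<le> x" by real_asymp
  ultimately have "\<forall>\<^sub>F K in sequentially.
      3 \<le> real K \<and> sqrt (ln (real K)) * ln (sqrt (ln (real K))) + ln 2 \<le> ln (real K)"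
    by (intro eventually_compose_filterlim[OF _ filterlim_real_sequentially] eventually_conj)
  then show ?thesis by (rule eventually_mono) (use exists_totient_le_ln_ln in blast)
qed

section \<open>Asymptotics\<close>

lemma nat_floor_mult_ln_ln_ge:
  fixes L c :: real
  assumes c: "c > 0" and L: "2 * c \<le> L" "exp 1 \<le> L / (2 * c)" "ln (ln L) \<le> 2 * ln (ln (L / (2 * c)))"
  shows "L * ln (ln L) \<le> 4 * c * real (nat \<lfloor>L / c\<rfloor>) * ln (ln (real (nat \<lfloor>L / c\<rfloor>)))"
proof -
  define z K where "z = L / (2 * c)" and "K = real (nat \<lfloor>L / c\<rfloor>)"
  have "L / c < K + 1" unfolding K_def by (rule real_lt_nat_floor_add_one)
  moreover have "L / c = 2 * z" unfolding z_def using c by simp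
  moreover have "1 \<le> exp (1::real)" by simp
  then have z: "z \<ge> 1" using L(2) unfolding z_def by linarith
  ultimately have zK: "z \<le> K" by linarith
  have lnz: "ln z \<ge> 1" using L(2) z unfolding z_def[symmetric] by (subst ln_ge_iff) auto
  have "L * ln (ln L) = (2 * c * z) * ln (ln L)" unfolding z_def using c by simp
  also have "\<dots> \<le> (2 * c * z) * (2 * ln (ln z))"
    using L(3)[folded z_def] c z by (intro mult_left_mono) auto
  also have "\<dots> \<le> (2 * c * K) * (2 * ln (ln K))"
  proof (rule mult_mono)
    have "ln z \<le> ln K" using zK z by simp
    then show "2 * ln (ln z) \<le> 2 * ln (ln K)" using lnz by simp
  qed (use zK z lnz c in auto)
  finally show ?thesis unfolding K_def by (simp add: algebra_simps)
qed

lemma power_totient_mult_le: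
  fixes b T K :: nat and L :: real
  assumes b: "b \<ge> 2" and K: "real K \<le> L / (3 * ln (real b))" and T: "totient T \<le> K" "T \<le> K\<^sup>2"
  shows "9 * real b ^ (totient T + 2) * real T
           \<le> 9 * (real b ^ 2 * exp (L / 3)) * (L / (3 * ln (real b)))\<^sup>2"
proof -
  have "real b ^ totient T \<le> real b ^ K" using T(1) b by (intro power_increasing) auto
  also have "\<dots> = exp (real K * ln (real b))" using b by (simp add: exp_of_nat_mult)
  also have "\<dots> \<le> exp (L / 3)" using K b by (simp add: field_simps)
  finally have "real b ^ 2 * real b ^ totient T \<le> real b ^ 2 * exp (L / 3)"
    by (intro mult_left_mono) auto
  then have "real b ^ (totient T + 2) \<le> real b ^ 2 * exp (L / 3)"
    by (simp only: power_add mult.commute)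
  moreover have "real T \<le> (L / (3 * ln (real b)))\<^sup>2"
    using T(2) power_mono[OF K, of 2] by (metis of_nat_le_iff of_nat_power of_nat_0_le_iff order_trans)
  ultimately show ?thesis by (intro mult_mono mult_left_mono) auto
qed

lemma eventually_digit_sums_ge:
  fixes b :: nat
  assumes b: "b \<ge> 2"
  shows "\<forall>\<^sub>F n in sequentially.
    ln (real n) * ln (ln (ln (real n))) \<le> 48 * ln (real b) * real (digit_sum b (fact n)) \<and>
    ln (real n) * ln (ln (ln (real n))) \<le> 48 * ln (real b) * real (digit_sum b (lcm_upto n))"
proof -
  define c where "c = 3 * ln (real b)"
  have c: "c > 0" unfolding c_def using b by simp
  define K where "K n = nat \<lfloor>ln (real n) / c\<rfloor>" for n :: nat
  have ln_lim: "filterlim (\<lambda>n. ln (real n)) at_top sequentially"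
    by (rule filterlim_compose[OF ln_at_top filterlim_real_sequentially])
  have "filterlim K sequentially sequentially"
    unfolding K_def using c
    by (intro filterlim_compose[OF filterlim_nat_sequentially] filterlim_compose[OF filterlim_floor_sequentially]
        filterlim_compose[OF _ ln_lim]) real_asymp
  then have "\<forall>\<^sub>F n in sequentially. \<exists>T. T \<ge> 1 \<and> totient T \<le> K n \<and> T \<le> (K n)\<^sup>2 \<and>
               real (K n) * ln (ln (real (K n))) \<le> 4 * real T"
    by (rule eventually_compose_filterlim[OF eventually_exists_totient_le])
  moreover have "\<forall>\<^sub>F L in at_top. 9 * real b ^ 2 * exp (L / 3) * (L / c)\<^sup>2 \<le> exp L \<and>
      2 * c \<le> L \<and> exp 1 \<le> L / (2 * c) \<and> ln (ln L) \<le> 2 * ln (ln (L / (2 * c)))"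
    using c b by (intro eventually_conj) real_asymp+
  then have "\<forall>\<^sub>F n in sequentially. 9 * real b ^ 2 * exp (ln (real n) / 3) * (ln (real n) / c)\<^sup>2 \<le> exp (ln (real n)) \<and>
      2 * c \<le> ln (real n) \<and> exp 1 \<le> ln (real n) / (2 * c) \<and>
      ln (ln (ln (real n))) \<le> 2 * ln (ln (ln (real n) / (2 * c)))"
    by (rule eventually_compose_filterlim[OF _ ln_lim])
  moreover have "\<forall>\<^sub>F n in sequentially. n > 0" by (rule eventually_gt_at_top)
  ultimately show ?thesis
  proof eventually_elim
    case (elim n)
    define L where "L = ln (real n)"
    obtain T where T: "T \<ge> 1" "totient T \<le> K n" "T \<le> (K n)\<^sup>2"
      "real (K n) * ln (ln (real (K n))) \<le> 4 * real T" using elim(1) by blast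
    have "L / c \<ge> 0" unfolding L_def using c elim(2) by simp
    then have "real (K n) \<le> L / c" unfolding K_def L_def by (rule of_nat_floor)
    then have "9 * real b ^ (totient T + 2) * real T \<le> 9 * (real b ^ 2 * exp (L / 3)) * (L / c)\<^sup>2"
      unfolding c_def using b T by (intro power_totient_mult_le) auto
    also have "\<dots> \<le> real n" using elim(2,3) unfolding L_def by (simp add: mult.assoc)
    finally have ds: "T \<le> digit_sum b (fact n)" "T \<le> digit_sum b (lcm_upto n)"
      using digit_sums_ge[OF b T(1)] by auto
    have "L * ln (ln L) \<le> 4 * c * (real (K n) * ln (ln (real (K n))))"
      unfolding K_def L_def mult.assoc[symmetric] using c elim(2) by (intro nat_floor_mult_ln_ln_ge) auto
    also have "\<dots> \<le> 4 * c * (4 * real T)" using T(4) c by (intro mult_left_mono) auto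
    also have "\<dots> = 48 * ln (real b) * real T" unfolding c_def by simp
    finally have "L * ln (ln L) \<le> 48 * ln (real b) * real T" .
    moreover have "48 * ln (real b) * real T \<le> 48 * ln (real b) * real (digit_sum b m)"
      if "T \<le> digit_sum b m" for m using that b by (intro mult_left_mono) auto
    ultimately show ?case using ds unfolding L_def by (meson order_trans)
  qed
qed

lemma uniform_bound_of_eventually:
  fixes g s :: "nat \<Rightarrow> real"
  assumes c: "c > 0" and s: "\<And>n. s n \<ge> 1" and ev: "\<forall>\<^sub>F n in sequentially. g n \<le> c * s n"
  shows "\<exists>C>0. \<forall>n. C * g n < s n"
proof -
  obtain N where N: "\<And>n. n \<ge> N \<Longrightarrow> g n \<le> c * s n" using ev by (auto simp: eventually_sequentially)
  define M where "M = Max (insert 0 (g ` {..<N}))"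
  have M: "M \<ge> 0" "\<And>n. n < N \<Longrightarrow> g n \<le> M" unfolding M_def by auto
  define C where "C = min (1 / (2 * c)) (1 / (2 * (M + 1)))"
  have C: "C > 0" unfolding C_def using c M by simp
  have "C * g n < s n" for n
  proof (cases "g n \<le> 0")
    case True
    then show ?thesis using C s[of n] by (smt (verit) mult_nonneg_nonpos)
  next
    case False
    show ?thesis
    proof (cases "n \<ge> N")
      case True
      have "C * g n \<le> g n / (2 * c)" unfolding C_def using False by (simp add: min_mult_distrib_right)
      also have "\<dots> < g n / c" using False c by (simp add: field_simps)
      also have "\<dots> \<le> s n" using N[OF True] c by (simp add: field_simps)
      finally show ?thesis .
    next
      case False
      have "C * g n \<le> g n / (2 * (M + 1))"
        unfolding C_def using \<open>\<not> g n \<le> 0\<close> by (simp add: min_mult_distrib_right)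
      also have "\<dots> \<le> M / (2 * (M + 1))"
        using M False by (intro divide_right_mono) auto
      also have "\<dots> < 1" using M by (simp add: field_simps)
      finally show ?thesis using s[of n] by simp
    qed
  qed
  then show ?thesis using C by blast
qed

theorem theorem1:
  fixes b :: nat
  assumes "b \<ge> 2"
  shows "\<exists>C::real. C > 0 \<and>
    (\<forall>n::nat. real n > exp 1 \<longrightarrow>
       real (digit_sum b (fact n)) > C * ln (real n) * ln (ln (ln (real n))) \<and>
       real (digit_sum b (lcm_upto n)) > C * ln (real n) * ln (ln (ln (real n))))"
proof -
  define s where "s n = min (real (digit_sum b (fact n))) (real (digit_sum b (lcm_upto n)))" for n
  have s: "s n \<ge> 1" for n
    unfolding s_def using digit_sum_pos[OF assms] lcm_upto_pos by simp
  have "\<forall>\<^sub>F n in sequentially. ln (real n) * ln (ln (ln (real n))) \<le> 48 * ln (real b) * s n"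
    using eventually_digit_sums_ge[OF assms] by eventually_elim
      (use assms in \<open>simp add: s_def min_mult_distrib_left\<close>)
  then have "\<exists>C>0. \<forall>n. C * (ln (real n) * ln (ln (ln (real n)))) < s n"
    using assms
    by (intro uniform_bound_of_eventually[where g = "\<lambda>n. ln (real n) * ln (ln (ln (real n)))", OF _ s])
      simp_all
  then show ?thesis unfolding s_def by (auto simp: mult.assoc)
qed

end
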